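(* If $A,B\subseteq\mathbb{N}$ are isobaric under a simple partition (of some window length $L\in\mathbb{N}$), then $m(A)=m(B)$.
   Context: $\mathbb{N}=\{1,2,3,\dots\}$, $\mathbb{N}_0=\mathbb{N}\cup\{0\}$. $\mathbf{No}$ denotes Conway's ordered field of surreal numbers, $\omega=\{0,1,2,\dots\mid\ \}$ its first infinite element. An omnific integer is a surreal $x$ with $x=\{x-1\mid x+1\}$; $\mathbf{Nn}$ (surnatural numbers) is the class of nonnegative omnific integers, $\mathbb{N}_0\subset\mathbf{Nn}$, and $\omega/L\in\mathbf{Nn}$ for every $L\in\mathbb{N}$. For $L\in\mathbb{N}$, the simple partition of window length $L$ is $\mathbb{N}=\biguplus_k W_k$, $W_k=\{(k-1)L+1,\dots,kL\}$; $A,B$ are isobaric under it if $|A\cap W_k|=|B\cap W_k|$ for all $k$. For $A\subseteq\mathbb{N}$, $\kappa_A(n)=|A\cap\{1,\dots,n\}|$. For $f,g:\mathbb{N}\to\mathbb{N}_0$, $f\overset{\to}{=}g$ means $f(n)=g(n)$ for all $n\ge N$ for some $N$; $f\overset{\to}{<}g$ means $f(n)<g(n)$ for all $n\ge N$ for some $N$. Axiom of Extension (standing assumption): every nondecreasing $f:\mathbb{N}\to\mathbb{N}_0$ has an extension $\hat f:\mathbf{Nn}\to\mathbf{Nn}$ with $\hat f(n)=f(n)$ for $n\in\mathbb{N}$ (constant sequences extend to the same constants, the identity extends to the identity, $n\mapsto Ln$ extends to $\nu\mapsto L\nu$), such that for nondecreasing $f,g$: $f\overset{\to}{=}g\Rightarrow\hat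 f(\nu)=\hat g(\nu)$ for all $\nu\in\mathbf{Nn}\setminus\mathbb{N}$; $f\overset{\to}{<}g\Rightarrow\hat f(\nu)<\hat g(\nu)$ for all $\nu\in\mathbf{Nn}\setminus\mathbb{N}$; and $\widehat{f+g}=\hat f+\hat g$, $\widehat{f\cdot g}=\hat f\cdot\hat g$, $\widehat{f\circ g}=\hat f\circ\hat g$ where defined. The magnum of $A\subseteq\mathbb{N}$ is $m(A):=\hat{\kappa_A}(\omega)$. *)

theory Defs
  imports Main
begin

text \<open>Sequences are functions on the positive naturals (values at 0 are irrelevant).
The surnatural numbers are modelled abstractly: the ambient type 'z plays the role of the
omnific integers (a linearly ordered integral domain), and Nn is its nonnegative part.\<close>

definition nondecr :: "(nat \<Rightarrow> nat) \<Rightarrow> bool" where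
  "nondecr f \<longleftrightarrow> (\<forall>m n. 1 \<le> m \<longrightarrow> m \<le> n \<longrightarrow> f m \<le> f n)"

definition ev_eq :: "(nat \<Rightarrow> nat) \<Rightarrow> (nat \<Rightarrow> nat) \<Rightarrow> bool" where
  "ev_eq f g \<longleftrightarrow> (\<exists>N\<ge>1. \<forall>n\<ge>N. f n = g n)"

definition ev_less :: "(nat \<Rightarrow> nat) \<Rightarrow> (nat \<Rightarrow> nat) \<Rightarrow> bool" where
  "ev_less f g \<longleftrightarrow> (\<exists>N\<ge>1. \<forall>n\<ge>N. f n < g n)"

definition Nn :: "'z::linordered_idom set" where
  "Nn = {x. 0 \<le> x}"

definition infinite_Nn :: "'z::linordered_idom set" where
  "infinite_Nn = {x \<in> Nn. x \<notin> range of_nat}"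

definition axiom_of_extension :: "((nat \<Rightarrow> nat) \<Rightarrow> 'z::linordered_idom \<Rightarrow> 'z) \<Rightarrow> bool" where
  "axiom_of_extension ext \<longleftrightarrow>
     (\<forall>f. nondecr f \<longrightarrow>
        (\<forall>\<nu>\<in>Nn. ext f \<nu> \<in> Nn) \<and>
        (\<forall>n\<ge>1. ext f (of_nat n) = of_nat (f n))) \<and>
     (\<forall>c. \<forall>\<nu>\<in>Nn. ext (\<lambda>_. c) \<nu> = of_nat c) \<and>
     (\<forall>\<nu>\<in>Nn. ext (\<lambda>n. n) \<nu> = \<nu>) \<and>
     (\<forall>L\<ge>1. \<forall>\<nu>\<in>Nn. ext (\<lambda>n. L * n) \<nu> = of_nat L * \<nu>) \<and>
     (\<forall>f g. nondecr f \<longrightarrow> nondecr g \<longrightarrow> ev_eq f g \<longrightarrow>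
        (\<forall>\<nu>\<in>infinite_Nn. ext f \<nu> = ext g \<nu>)) \<and>
     (\<forall>f g. nondecr f \<longrightarrow> nondecr g \<longrightarrow> ev_less f g \<longrightarrow>
        (\<forall>\<nu>\<in>infinite_Nn. ext f \<nu> < ext g \<nu>)) \<and>
     (\<forall>f g. nondecr f \<longrightarrow> nondecr g \<longrightarrow>
        (\<forall>\<nu>\<in>Nn. ext (\<lambda>n. f n + g n) \<nu> = ext f \<nu> + ext g \<nu>)) \<and>
     (\<forall>f g. nondecr f \<longrightarrow> nondecr g \<longrightarrow>
        (\<forall>\<nu>\<in>Nn. ext (\<lambda>n. f n * g n) \<nu> = ext f \<nu> * ext g \<nu>)) \<and>
     (\<forall>f g. nondecr f \<longrightarrow> nondecr g \<longrightarrow> (\<forall>n\<ge>1. g n \<ge> 1) \<longrightarrow>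
        (\<forall>\<nu>\<in>Nn. ext (f \<circ> g) \<nu> = ext f (ext g \<nu>)))"

definition omega_like :: "'z::linordered_idom \<Rightarrow> bool" where
  "omega_like w \<longleftrightarrow> (\<forall>n::nat. of_nat n < w) \<and>
     (\<forall>L::nat. L \<ge> 1 \<longrightarrow> (\<exists>\<nu>\<in>Nn. of_nat L * \<nu> = w))"

definition kappa :: "nat set \<Rightarrow> nat \<Rightarrow> nat" where
  "kappa A n = card (A \<inter> {1..n})"

definition magnum :: "((nat \<Rightarrow> nat) \<Rightarrow> 'z::linordered_idom \<Rightarrow> 'z) \<Rightarrow> 'z \<Rightarrow> nat set \<Rightarrow> 'z" where
  "magnum ext w A = ext (kappa A) w"

definition window :: "nat \<Rightarrow> nat \<Rightarrow> nat set" where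
  "window L k = {(k - 1) * L + 1 .. k * L}"

definition isobaric :: "nat \<Rightarrow> nat set \<Rightarrow> nat set \<Rightarrow> bool" where
  "isobaric L A B \<longleftrightarrow> (\<forall>k\<ge>1. card (A \<inter> window L k) = card (B \<inter> window L k))"

end

theory Submission
  imports Defs
begin

text \<open>Isobaric sets have equal counting functions at every multiple of the window length L.
Since \<omega> = L \<nu> for a surnatural \<nu>, the composition rule of the Axiom of Extension
rewrites m(A) as the extension of n \<mapsto> kappa A (L n) evaluated at \<nu>, and likewise for B;
these two sequences coincide.\<close>

lemma nondecr_kappa: "nondecr (kappa A)"
  unfolding nondecr_def kappa_def by (auto intro!: card_mono)

lemma kappa_mult_Suc:
  "kappa A (L * Suc n) = kappa A (L * n) + card (A \<inter> window L (Suc n))"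
proof -
  have "A \<inter> {1..L * Suc n} = (A \<inter> {1..L * n}) \<union> (A \<inter> window L (Suc n))"
    by (auto simp: window_def algebra_simps)
  moreover have "(A \<inter> {1..L * n}) \<inter> (A \<inter> window L (Suc n)) = {}"
    by (auto simp: window_def algebra_simps)
  ultimately show ?thesis
    unfolding kappa_def by (simp add: card_Un_disjoint window_def)
qed

lemma isobaric_kappa_mult_eq:
  assumes "isobaric L A B"
  shows "kappa A (L * n) = kappa B (L * n)"
proof (induction n)
  case 0
  show ?case by (simp add: kappa_def)
next
  case (Suc n)
  then show ?case
    using assms unfolding isobaric_def by (simp only: kappa_mult_Suc)
qed

lemma ext_comp_scale:
  assumes "axiom_of_extension ext" and "nondecr f" and "L \<ge> 1" and "\<nu> \<in> Nn"
  shows "ext (\<lambda>n. f (L * n)) \<nu> = ext f (of_nat L * \<nu>)"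
proof -
  have scale: "ext (\<lambda>n. L * n) \<nu> = of_nat L * \<nu>"
    using assms(1,3,4) unfolding axiom_of_extension_def by blast
  have "nondecr (\<lambda>n. L * n)"
    unfolding nondecr_def by simp
  moreover have "\<forall>n\<ge>1. L * n \<ge> 1"
    using assms(3) by simp
  ultimately have "ext (f \<circ> (\<lambda>n. L * n)) \<nu> = ext f (ext (\<lambda>n. L * n) \<nu>)"
    using assms(1,2,4) unfolding axiom_of_extension_def by blast
  then show ?thesis
    by (simp add: comp_def scale)
qed

theorem theorem6p8:
  fixes ext :: "(nat \<Rightarrow> nat) \<Rightarrow> 'z::linordered_idom \<Rightarrow> 'z"
    and \<omega> :: 'z and L :: nat and A B :: "nat set"
  assumes "axiom_of_extension ext"
    and "omega_like \<omega>"
    and "L \<ge> 1"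
    and "A \<subseteq> {1..}" and "B \<subseteq> {1..}"
    and "isobaric L A B"
  shows "magnum ext \<omega> A = magnum ext \<omega> B"
proof -
  obtain \<nu> where \<nu>: "\<nu> \<in> Nn" and \<omega>: "\<omega> = of_nat L * \<nu>"
    using assms(2,3) unfolding omega_like_def by metis
  have "magnum ext \<omega> A = ext (\<lambda>n. kappa A (L * n)) \<nu>"
    unfolding magnum_def \<omega> using ext_comp_scale[OF assms(1) nondecr_kappa assms(3) \<nu>] by simp
  also have "\<dots> = ext (\<lambda>n. kappa B (L * n)) \<nu>"
    using isobaric_kappa_mult_eq[OF assms(6)] by simp
  also have "\<dots> = magnum ext \<omega> B"
    unfolding magnum_def \<omega> using ext_comp_scale[OF assms(1) nondecr_kappa assms(3) \<nu>] by simp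
  finally show ?thesis .
qed

end
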